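(* Let $\Gamma_0>0$ and $\rho_0\in(0,\frac\pi2)$. There exist $h_0>0$ and $C_0>0$ such that for all $h\in(0,h_0)$ and every eigenpair $(\lambda,\psi)$ of $\mathcal H_{\mathsf{BO},\mathsf{Tri}}(h)$ with $|\lambda-\frac18|\le\Gamma_0h^{2/3}$, $$\int_{-\pi\sqrt2}^0(x+\pi\sqrt2)^{-\rho_0/h}\big(|\psi|^2+|h\,\partial_x\psi|^2\big)\,dx\le C_0\|\psi\|^2.$$
   Context: For $h>0$, $\mathcal H_{\mathsf{BO},\mathsf{Tri}}(h)=-h^2\partial_x^2+\frac{\pi^2}{4(x+\pi\sqrt2)^2}$ is the Dirichlet realization on $L^2((-\pi\sqrt2,0))$; $\|\cdot\|$ is the $L^2((-\pi\sqrt2,0))$ norm. *)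

theory Defs
  imports "HOL-Analysis.Analysis"
begin

definition BOleft :: real where "BOleft = - pi * sqrt 2"

definition BOpot :: "real \<Rightarrow> real" where
  "BOpot x = pi\<^sup>2 / (4 * (x + pi * sqrt 2)\<^sup>2)"

text \<open>(lam, psi) is an eigenpair of the Dirichlet realization of
  -h^2 d^2/dx^2 + BOpot on L^2((-pi sqrt 2, 0)), with dpsi the derivative of psi.
  psi lies in the form domain (continuous on the closed interval, vanishing at both
  endpoints, square-integrable derivative, finite potential energy), is C^2 in the
  interior (interior elliptic regularity) and solves the eigenvalue equation there;
  psi is not identically zero.\<close>
definition BO_eigenpair :: "real \<Rightarrow> real \<Rightarrow> (real \<Rightarrow> complex) \<Rightarrow> (real \<Rightarrow> complex) \<Rightarrow> bool" where
  "BO_eigenpair h lam psi dpsi \<longleftrightarrow>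
     continuous_on {BOleft..0} psi \<and> psi BOleft = 0 \<and> psi 0 = 0 \<and>
     (\<exists>x\<in>{BOleft<..<0}. psi x \<noteq> 0) \<and>
     (\<exists>ddpsi. \<forall>x\<in>{BOleft<..<0}.
        (psi has_vector_derivative dpsi x) (at x) \<and>
        (dpsi has_vector_derivative ddpsi x) (at x) \<and>
        - complex_of_real (h\<^sup>2) * ddpsi x + complex_of_real (BOpot x) * psi x
          = complex_of_real lam * psi x) \<and>
     (\<lambda>x. (cmod (dpsi x))\<^sup>2) integrable_on {BOleft..0} \<and>
     (\<lambda>x. BOpot x * (cmod (psi x))\<^sup>2) integrable_on {BOleft..0}"

end

theory Submission
  imports Defs
begin

text \<open>Multiply the eigenvalue equation by \<open>q \<cdot> cnj \<psi>\<close>, where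
  \<open>q(x) = s\<^sup>-\<^sup>\<rho>\<^sup>/\<^sup>h\<close> and \<open>s = x + \<pi>\<surd>2\<close>, and integrate by parts. The boundary term
  \<open>F = 2h\<^sup>2 q Re(\<psi>' cnj \<psi>)\<close> has derivative
  \<open>2h\<^sup>2 q' Re(\<psi>' cnj \<psi>) + 2q (h\<^sup>2|\<psi>'|\<^sup>2 + (V - \<lambda>)|\<psi>|\<^sup>2)\<close>; absorbing the cross term by
  AM-GM sets the potential \<open>V = \<pi>\<^sup>2/(4s\<^sup>2)\<close> against \<open>\<rho>\<^sup>2/s\<^sup>2\<close>, and since \<open>\<rho> < \<pi>/2\<close> and
  \<open>\<lambda> \<le> 1/2\<close> for small \<open>h\<close> one gets \<open>F' \<ge> q(|\<psi>|\<^sup>2 + h\<^sup>2|\<psi>'|\<^sup>2) - 2|\<psi>|\<^sup>2\<close>. The Dirichlet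
  conditions provide points arbitrarily close to the endpoints where \<open>F \<ge> 0\<close> on the left
  and \<open>F \<le> 0\<close> on the right, so the weighted energy over any compact subinterval is at most
  \<open>2\<parallel>\<psi>\<parallel>\<^sup>2\<close>; monotone convergence gives the bound on the whole interval with \<open>C\<^sub>0 = 2\<close>.\<close>

lemma Re_mult_cnj_self: "Re (z * cnj z) = (cmod z)\<^sup>2"
  by (metis Re_complex_of_real complex_norm_square)

lemma Re_mult_cnj_eigen_equation:
  fixes z z'' :: complex and h V lam :: real
  assumes "- complex_of_real (h\<^sup>2) * z'' + complex_of_real V * z = complex_of_real lam * z"
  shows "h\<^sup>2 * Re (z'' * cnj z) = (V - lam) * (cmod z)\<^sup>2"
proof -
  have "complex_of_real (h\<^sup>2) * z'' = complex_of_real (V - lam) * z"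
    using assms by (simp add: algebra_simps)
  then have "Re (complex_of_real (h\<^sup>2) * (z'' * cnj z)) = Re (complex_of_real (V - lam) * (z * cnj z))"
    by (simp only: mult.assoc[symmetric])
  then show ?thesis
    unfolding Re_mult_cnj_self[symmetric] by simp
qed

lemma has_real_derivative_Re_mult_cnj:
  assumes "(f has_vector_derivative f') (at x)" and "(g has_vector_derivative g') (at x)"
  shows "((\<lambda>x. Re (f x * cnj (g x))) has_real_derivative Re (f x * cnj g' + f' * cnj (g x))) (at x)"
  using assms by (intro has_field_derivative_Re has_vector_derivative_mult has_vector_derivative_cnj)

lemma has_real_derivative_shifted_powr:
  fixes c r :: real
  assumes "x + c > 0"
  shows "((\<lambda>x. (x + c) powr r) has_real_derivative r * ((x + c) powr r / (x + c))) (at x)"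
proof -
  have "((\<lambda>x. (x + c) powr r) has_real_derivative r * (x + c) powr (r - 1) * 1) (at x)"
    by (rule DERIV_fun_powr[where g = "\<lambda>x. x + c", simplified of_nat_1])
       (auto intro!: derivative_eq_intros assms)
  then show ?thesis
    using assms by (simp add: powr_diff)
qed

lemma two_mult_le_if_square_le_mult:
  fixes u v t A B :: real
  assumes "0 \<le> A" and "0 \<le> B" and "t\<^sup>2 \<le> A * B"
  shows "2 * u * v * t \<le> u\<^sup>2 * B + v\<^sup>2 * A"
proof -
  have square_diff: "(X + Y)\<^sup>2 - (X - Y)\<^sup>2 = 4 * X * Y" for X Y :: real
    by (simp add: power2_eq_square algebra_simps)
  have "(2 * u * v * t)\<^sup>2 = 4 * u\<^sup>2 * v\<^sup>2 * t\<^sup>2"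
    by (simp add: power_mult_distrib)
  also have "\<dots> \<le> 4 * u\<^sup>2 * v\<^sup>2 * (A * B)"
    using assms(3) by (intro mult_left_mono) auto
  also have "\<dots> = (u\<^sup>2 * B + v\<^sup>2 * A)\<^sup>2 - (u\<^sup>2 * B - v\<^sup>2 * A)\<^sup>2"
    unfolding square_diff by simp
  also have "\<dots> \<le> (u\<^sup>2 * B + v\<^sup>2 * A)\<^sup>2"
    by simp
  finally have "(2 * u * v * t)\<^sup>2 \<le> (u\<^sup>2 * B + v\<^sup>2 * A)\<^sup>2" .
  moreover have "0 \<le> u\<^sup>2 * B + v\<^sup>2 * A"
    using assms(1,2) by simp
  ultimately show ?thesis
    by (rule power2_le_imp_le)
qed

text \<open>Pointwise core of the estimate, at \<open>s = x + \<pi>\<surd>2\<close> with weight \<open>q\<close>,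
  \<open>A = |\<psi>|\<^sup>2\<close>, \<open>B = |\<psi>'|\<^sup>2\<close> and \<open>t = Re(\<psi>' cnj \<psi>)\<close>. AM-GM with \<open>k = \<rho>/s\<close> absorbs the
  cross term; then \<open>\<rho> < \<pi>/2\<close> leaves at least \<open>\<pi>\<^sup>2/(4s\<^sup>2)\<close> of the potential, which beats
  \<open>2\<lambda> + 1\<close> for \<open>s \<le> 1\<close>, while for \<open>s \<ge> 1\<close> the weight is at most 1.\<close>

lemma weighted_energy_le_flux_derivative_pointwise:
  fixes h rho lam s q A B t :: real
  assumes h: "0 < h" and rho: "0 < rho" "rho < pi / 2" and lam: "lam \<le> 1/2"
    and s: "0 < s" and q: "0 < q" "1 \<le> s \<Longrightarrow> q \<le> 1"
    and AB: "0 \<le> A" "0 \<le> B" "t\<^sup>2 \<le> A * B"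
  shows "q * (A + h\<^sup>2 * B)
           \<le> 2 * (h\<^sup>2 * (- rho / h * (q / s) * t + q * B) + q * (pi\<^sup>2 / (4 * s\<^sup>2) - lam) * A) + 2 * A"
proof -
  define k where "k = rho / s"
  define c where "c = 2 * (pi\<^sup>2 / (4 * s\<^sup>2)) - k\<^sup>2 - 2 * lam - 1"
  have amgm: "2 * h * k * t \<le> h\<^sup>2 * B + k\<^sup>2 * A"
    using two_mult_le_if_square_le_mult[OF AB] .
  have rhs: "2 * (h\<^sup>2 * (- rho / h * (q / s) * t + q * B) + q * (pi\<^sup>2 / (4 * s\<^sup>2) - lam) * A) + 2 * A
      - q * (A + h\<^sup>2 * B) = q * (h\<^sup>2 * B + k\<^sup>2 * A - 2 * h * k * t) + q * c * A + 2 * A"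
    using h s by (simp add: k_def c_def field_simps power2_eq_square)
  have "rho\<^sup>2 \<le> (pi / 2)\<^sup>2"
    using rho by (intro power_mono) auto
  then have "pi\<^sup>2 / (4 * s\<^sup>2) \<le> 2 * (pi\<^sup>2 / (4 * s\<^sup>2)) - k\<^sup>2"
    using s by (simp add: k_def field_simps power2_eq_square)
  then have c_ge: "pi\<^sup>2 / (4 * s\<^sup>2) - 2 \<le> c"
    using lam by (simp add: c_def)
  have "0 \<le> q * c * A + 2 * A"
  proof (cases "s \<le> 1")
    case True
    have "(3::real)\<^sup>2 \<le> pi\<^sup>2"
      using pi_gt3 by (intro power_mono) auto
    moreover have "s\<^sup>2 \<le> 1"
      using True s by (simp add: power_le_one)
    ultimately have "2 \<le> pi\<^sup>2 / (4 * s\<^sup>2)"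
      using s by (simp add: field_simps)
    then show ?thesis
      using c_ge q AB by simp
  next
    case False
    have "0 \<le> pi\<^sup>2 / (4 * s\<^sup>2)"
      by simp
    then have "-2 \<le> c"
      using c_ge by linarith
    then have "q * (-2) * A \<le> q * c * A"
      using q AB by (intro mult_right_mono mult_left_mono) auto
    moreover have "q * A \<le> 1 * A"
      using q(2) False AB by (intro mult_right_mono) auto
    ultimately show ?thesis
      by linarith
  qed
  moreover have "0 \<le> q * (h\<^sup>2 * B + k\<^sup>2 * A - 2 * h * k * t)"
    using amgm q by simp
  ultimately show ?thesis
    using rhs by linarith
qed

lemma norm_square_MVT:
  fixes psi dpsi :: "real \<Rightarrow> complex"
  assumes "c < d" and "continuous_on {c..d} psi"
    and "\<And>x. x \<in> {c<..<d} \<Longrightarrow> (psi has_vector_derivative dpsi x) (at x)"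
  obtains z where "z \<in> {c<..<d}"
    and "(cmod (psi d))\<^sup>2 - (cmod (psi c))\<^sup>2 = 2 * (d - c) * Re (dpsi z * cnj (psi z))"
proof -
  define f where "f x = Re (psi x * cnj (psi x))" for x
  have f_eq: "f x = (cmod (psi x))\<^sup>2" for x
    unfolding f_def by (rule Re_mult_cnj_self)
  have f_deriv: "(f has_real_derivative 2 * Re (dpsi x * cnj (psi x))) (at x)"
    if "x \<in> {c<..<d}" for x
  proof -
    have "Re (psi x * cnj (dpsi x) + dpsi x * cnj (psi x)) = 2 * Re (dpsi x * cnj (psi x))"
      by simp
    then show ?thesis
      using has_real_derivative_Re_mult_cnj[OF assms(3)[OF that] assms(3)[OF that]]
      unfolding f_def by simp
  qed
  have "continuous_on {c..d} f"
    unfolding f_def using assms(2) by (intro continuous_intros)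
  moreover have "f differentiable (at x)" if "c < x" "x < d" for x
    using f_deriv that by (auto simp: real_differentiable_def)
  ultimately obtain l z where z: "c < z" "z < d" "(f has_real_derivative l) (at z)"
      "f d - f c = (d - c) * l"
    using MVT[OF assms(1)] by blast
  have "l = 2 * Re (dpsi z * cnj (psi z))"
    using z(1,2) by (intro DERIV_unique[OF z(3) f_deriv]) auto
  with z show ?thesis
    using that[of z] unfolding f_eq by (simp add: algebra_simps)
qed

lemma Re_deriv_mult_cnj_nonneg_near_left_zero:
  fixes psi dpsi :: "real \<Rightarrow> complex"
  assumes "c < d" and "continuous_on {c..d} psi" and "psi c = 0"
    and "\<And>x. x \<in> {c<..<d} \<Longrightarrow> (psi has_vector_derivative dpsi x) (at x)"
  obtains z where "z \<in> {c<..<d}" and "0 \<le> Re (dpsi z * cnj (psi z))"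
proof -
  obtain z where "z \<in> {c<..<d}"
    and "(cmod (psi d))\<^sup>2 = 2 * (d - c) * Re (dpsi z * cnj (psi z))"
    using norm_square_MVT[OF assms(1,2,4)] assms(3) by auto
  moreover from this(2) have "0 \<le> 2 * (d - c) * Re (dpsi z * cnj (psi z))"
    by (metis zero_le_power2)
  ultimately show ?thesis
    using that assms(1) by (simp add: zero_le_mult_iff)
qed

lemma Re_deriv_mult_cnj_nonpos_near_right_zero:
  fixes psi dpsi :: "real \<Rightarrow> complex"
  assumes "c < d" and "continuous_on {c..d} psi" and "psi d = 0"
    and "\<And>x. x \<in> {c<..<d} \<Longrightarrow> (psi has_vector_derivative dpsi x) (at x)"
  obtains z where "z \<in> {c<..<d}" and "Re (dpsi z * cnj (psi z)) \<le> 0"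
proof -
  obtain z where "z \<in> {c<..<d}"
    and "- (cmod (psi c))\<^sup>2 = 2 * (d - c) * Re (dpsi z * cnj (psi z))"
    using norm_square_MVT[OF assms(1,2,4)] assms(3) by auto
  moreover from this(2) have "2 * (d - c) * Re (dpsi z * cnj (psi z)) \<le> 0"
    by (metis neg_le_0_iff_le zero_le_power2)
  ultimately show ?thesis
    using that assms(1) by (simp add: mult_le_0_iff)
qed

lemma integral_le_integral_if_le_derivative:
  fixes F F' w g :: "real \<Rightarrow> real"
  assumes "a \<le> b" and "\<And>x. x \<in> {a..b} \<Longrightarrow> (F has_real_derivative F' x) (at x)"
    and "w integrable_on {a..b}" and "g integrable_on {a..b}"
    and "\<And>x. x \<in> {a..b} \<Longrightarrow> w x \<le> F' x + g x"
    and "0 \<le> F a" and "F b \<le> 0"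
  shows "integral {a..b} w \<le> integral {a..b} g"
proof -
  have "(F' has_integral F b - F a) {a..b}"
    using assms(1,2)
    by (intro fundamental_theorem_of_calculus)
       (auto simp: has_real_derivative_iff_has_vector_derivative intro: has_vector_derivative_at_within)
  then have "((\<lambda>x. F' x + g x) has_integral F b - F a + integral {a..b} g) {a..b}"
    using assms(4) by (intro has_integral_add) auto
  then have "integral {a..b} w \<le> F b - F a + integral {a..b} g"
    using assms(3,5) by (intro has_integral_le[OF integrable_integral]) auto
  with assms(6,7) show ?thesis
    by linarith
qed

lemma nonneg_integrable_on_Icc_if_inner_integrals_bounded:
  fixes w :: "real \<Rightarrow> real" and l r M :: real
  assumes "l < r" and nonneg: "\<And>x. x \<in> {l<..<r} \<Longrightarrow> 0 \<le> w x"
    and integrable: "\<And>a b. l < a \<Longrightarrow> a \<le> b \<Longrightarrow> b < r \<Longrightarrow> w integrable_on {a..b}"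
    and bounded: "\<And>a b. l < a \<Longrightarrow> a \<le> b \<Longrightarrow> b < r \<Longrightarrow> integral {a..b} w \<le> M"
  shows "w integrable_on {l..r} \<and> integral {l..r} w \<le> M"
proof -
  define e where "e k = (r - l) / (real k + 3)" for k :: nat
  define a where "a k = l + e k" for k
  define b where "b k = r - e k" for k
  define f where "f k x = (if x \<in> {a k..b k} then w x else 0)" for k x
  have e_pos: "0 < e k" for k
    using assms(1) by (simp add: e_def)
  have e_small: "e k < (r - l) / 2" for k
    using assms(1) unfolding e_def by (intro divide_strict_left_mono) auto
  have e_Suc: "e (Suc k) \<le> e k" for k
    using assms(1) unfolding e_def by (intro divide_left_mono) auto
  have ab: "l < a k" "a k \<le> b k" "b k < r" for k
    using e_pos[of k] e_small[of k] by (auto simp: a_def b_def field_simps)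
  have f_integral: "(f k has_integral integral {a k..b k} w) {l<..<r}" for k
    unfolding f_def using ab[of k]
    by (subst has_integral_restrict) (auto intro: integrable_integral integrable[OF ab(1-3)])
  have f_mono: "f k x \<le> f (Suc k) x" if "x \<in> {l<..<r}" for k x
    using e_Suc[of k] nonneg[OF that] by (auto simp: f_def a_def b_def)
  have "e \<longlonglongrightarrow> 0"
    unfolding e_def
    by (intro tendsto_divide_0[OF tendsto_const] tendsto_add_filterlim_at_infinity'
        filterlim_at_top_imp_at_infinity filterlim_real_sequentially)
       (rule tendsto_const)
  then have f_lim: "(\<lambda>k. f k x) \<longlonglongrightarrow> w x" if "x \<in> {l<..<r}" for x
  proof -
    have "\<forall>\<^sub>F k in sequentially. e k < min (x - l) (r - x)"
      using order_tendstoD(2)[OF \<open>e \<longlonglongrightarrow> 0\<close>, of "min (x - l) (r - x)"] that by simp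
    then have "\<forall>\<^sub>F k in sequentially. f k x = w x"
      by (rule eventually_mono) (auto simp: f_def a_def b_def)
    then show ?thesis
      by (rule tendsto_eventually)
  qed
  have f_bounded: "\<bar>integral {l<..<r} (f k)\<bar> \<le> M" for k
  proof -
    have "0 \<le> integral {a k..b k} w"
      using ab[of k] nonneg by (intro integral_nonneg integrable) auto
    then show ?thesis
      using f_integral[of k] bounded[OF ab] by (simp add: integral_unique)
  qed
  have "w integrable_on {l<..<r} \<and> (\<lambda>k. integral {l<..<r} (f k)) \<longlonglongrightarrow> integral {l<..<r} w"
    using f_integral f_mono f_lim f_bounded
    by (intro monotone_convergence_increasing) (auto intro!: boundedI)
  moreover have "integral {l<..<r} (f k) \<le> M" for k
    using f_bounded[of k] by simp
  ultimately have "w integrable_on {l<..<r} \<and> integral {l<..<r} w \<le> M"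
    by (metis LIMSEQ_le_const2)
  then show ?thesis
    by (simp add: integrable_on_Icc_iff_Ioo integral_open_interval_real)
qed

definition BO_weighted_energy ::
  "real \<Rightarrow> real \<Rightarrow> (real \<Rightarrow> complex) \<Rightarrow> (real \<Rightarrow> complex) \<Rightarrow> real \<Rightarrow> real" where
  "BO_weighted_energy rho h psi dpsi x =
     (x + pi * sqrt 2) powr (- rho / h) * ((cmod (psi x))\<^sup>2 + (cmod (complex_of_real h * dpsi x))\<^sup>2)"

text \<open>Boundary term of the integration by parts against the weight of
  \<open>BO_weighted_energy\<close>.\<close>

definition BO_flux :: "real \<Rightarrow> real \<Rightarrow> (real \<Rightarrow> complex) \<Rightarrow> (real \<Rightarrow> complex) \<Rightarrow> real \<Rightarrow> real" where
  "BO_flux rho h psi dpsi x = 2 * h\<^sup>2 * ((x + pi * sqrt 2) powr (- rho / h) * Re (dpsi x * cnj (psi x)))"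

lemma BO_flux_derivative_bound:
  fixes psi dpsi ddpsi :: "real \<Rightarrow> complex"
  assumes h: "0 < h" and rho: "0 < rho" "rho < pi / 2" and lam: "lam \<le> 1/2"
    and x: "x \<in> {BOleft<..<0}"
    and d1: "(psi has_vector_derivative dpsi x) (at x)"
    and d2: "(dpsi has_vector_derivative ddpsi x) (at x)"
    and eq: "- complex_of_real (h\<^sup>2) * ddpsi x + complex_of_real (BOpot x) * psi x
               = complex_of_real lam * psi x"
  shows "\<exists>D. (BO_flux rho h psi dpsi has_real_derivative D) (at x) \<and>
             BO_weighted_energy rho h psi dpsi x \<le> D + 2 * (cmod (psi x))\<^sup>2"
proof -
  define s where "s = x + pi * sqrt 2"
  define q where "q = s powr (- rho / h)"
  define A where "A = (cmod (psi x))\<^sup>2"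
  define B where "B = (cmod (dpsi x))\<^sup>2"
  define t where "t = Re (dpsi x * cnj (psi x))"
  have s: "0 < s"
    using x by (simp add: s_def BOleft_def)
  have q: "0 < q" "1 \<le> s \<Longrightarrow> q \<le> 1"
    using s h rho powr_mono2'[of "- rho / h" 1 s] by (auto simp: q_def)
  have AB: "0 \<le> A" "0 \<le> B"
    by (simp_all add: A_def B_def)
  have "t\<^sup>2 \<le> A * B"
  proof -
    have "\<bar>t\<bar> \<le> cmod (psi x) * cmod (dpsi x)"
      using abs_Re_le_cmod[of "dpsi x * cnj (psi x)"] by (simp add: t_def norm_mult mult.commute)
    then have "\<bar>t\<bar>\<^sup>2 \<le> (cmod (psi x) * cmod (dpsi x))\<^sup>2"
      by (intro power_mono) auto
    then show ?thesis
      by (simp add: A_def B_def power_mult_distrib)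
  qed
  with h rho lam s q AB
  have bound: "q * (A + h\<^sup>2 * B)
      \<le> 2 * (h\<^sup>2 * (- rho / h * (q / s) * t + q * B) + q * (pi\<^sup>2 / (4 * s\<^sup>2) - lam) * A) + 2 * A"
    by (rule weighted_energy_le_flux_derivative_pointwise)
  have "((\<lambda>x. (x + pi * sqrt 2) powr (- rho / h) * Re (dpsi x * cnj (psi x))) has_real_derivative
      - rho / h * (q / s) * t + Re (dpsi x * cnj (dpsi x) + ddpsi x * cnj (psi x)) * q) (at x)"
    using DERIV_mult[OF has_real_derivative_shifted_powr[OF s[unfolded s_def], of "- rho / h"]
        has_real_derivative_Re_mult_cnj[OF d2 d1]]
    unfolding s_def q_def t_def .
  then have "(BO_flux rho h psi dpsi has_real_derivative
      2 * h\<^sup>2 * (- rho / h * (q / s) * t + Re (dpsi x * cnj (dpsi x) + ddpsi x * cnj (psi x)) * q)) (at x)"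
    unfolding BO_flux_def[abs_def] by (rule DERIV_cmult)
  moreover have "2 * h\<^sup>2 * (- rho / h * (q / s) * t + Re (dpsi x * cnj (dpsi x) + ddpsi x * cnj (psi x)) * q)
      = 2 * (h\<^sup>2 * (- rho / h * (q / s) * t + q * B) + q * (pi\<^sup>2 / (4 * s\<^sup>2) - lam) * A)"
  proof -
    define u where "u = Re (ddpsi x * cnj (psi x))"
    have "Re (dpsi x * cnj (dpsi x) + ddpsi x * cnj (psi x)) = B + u"
      by (simp only: plus_complex.sel Re_mult_cnj_self B_def u_def)
    moreover have "h\<^sup>2 * u = (pi\<^sup>2 / (4 * s\<^sup>2) - lam) * A"
      using Re_mult_cnj_eigen_equation[OF eq] by (simp add: u_def A_def BOpot_def s_def)
    moreover have "2 * h\<^sup>2 * (- rho / h * (q / s) * t + (B + u) * q)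
        = 2 * (h\<^sup>2 * (- rho / h * (q / s) * t + q * B) + q * (h\<^sup>2 * u))"
      by (simp add: algebra_simps)
    ultimately show ?thesis
      by (simp add: mult.assoc)
  qed
  moreover have "BO_weighted_energy rho h psi dpsi x = q * (A + h\<^sup>2 * B)"
    using h by (simp add: BO_weighted_energy_def q_def s_def A_def B_def norm_mult power_mult_distrib)
  ultimately show ?thesis
    using bound unfolding A_def by auto
qed

lemma BO_eigenpair_flux_derivative:
  fixes psi dpsi :: "real \<Rightarrow> complex"
  assumes "BO_eigenpair h lam psi dpsi"
    and h: "0 < h" and rho: "0 < rho" "rho < pi / 2" and lam: "lam \<le> 1/2"
  obtains F' where "\<And>x. x \<in> {BOleft<..<0} \<Longrightarrow> (BO_flux rho h psi dpsi has_real_derivative F' x) (at x)"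
    and "\<And>x. x \<in> {BOleft<..<0} \<Longrightarrow> BO_weighted_energy rho h psi dpsi x \<le> F' x + 2 * (cmod (psi x))\<^sup>2"
proof -
  obtain ddpsi where eigen: "\<forall>x\<in>{BOleft<..<0}.
      (psi has_vector_derivative dpsi x) (at x) \<and> (dpsi has_vector_derivative ddpsi x) (at x) \<and>
      - complex_of_real (h\<^sup>2) * ddpsi x + complex_of_real (BOpot x) * psi x = complex_of_real lam * psi x"
    using assms(1) unfolding BO_eigenpair_def by blast
  have "\<forall>x\<in>{BOleft<..<0}. \<exists>D. (BO_flux rho h psi dpsi has_real_derivative D) (at x) \<and>
      BO_weighted_energy rho h psi dpsi x \<le> D + 2 * (cmod (psi x))\<^sup>2"
    using eigen by (blast intro: BO_flux_derivative_bound[OF h rho lam])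
  then show ?thesis
    using that by (metis (no_types, lifting) bchoice)
qed

lemma BO_eigenpair_weighted_energy_continuous_on:
  fixes psi dpsi :: "real \<Rightarrow> complex"
  assumes "BO_eigenpair h lam psi dpsi" and "{c..d} \<subseteq> {BOleft<..<0}"
  shows "continuous_on {c..d} (BO_weighted_energy rho h psi dpsi)"
proof (intro continuous_at_imp_continuous_on ballI)
  fix x assume "x \<in> {c..d}"
  with assms(2) have x: "x \<in> {BOleft<..<0}" and "0 < x + pi * sqrt 2"
    by (auto simp: BOleft_def)
  obtain ddpsi where "(psi has_vector_derivative dpsi x) (at x)" "(dpsi has_vector_derivative ddpsi x) (at x)"
    using assms(1) x unfolding BO_eigenpair_def by blast
  with \<open>0 < x + pi * sqrt 2\<close> show "isCont (BO_weighted_energy rho h psi dpsi) x"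
    unfolding BO_weighted_energy_def[abs_def]
    by (auto intro!: continuous_intros dest!: has_vector_derivative_continuous)
qed

lemma BO_eigenpair_weighted_energy_inner_bound:
  fixes psi dpsi :: "real \<Rightarrow> complex"
  assumes eigen: "BO_eigenpair h lam psi dpsi"
    and h: "0 < h" and rho: "0 < rho" "rho < pi / 2" and lam: "lam \<le> 1/2"
    and ab: "BOleft < a" "a \<le> b" "b < 0"
  shows "BO_weighted_energy rho h psi dpsi integrable_on {a..b} \<and>
         integral {a..b} (BO_weighted_energy rho h psi dpsi)
           \<le> 2 * integral {BOleft..0} (\<lambda>x. (cmod (psi x))\<^sup>2)"
proof -
  define w where "w = BO_weighted_energy rho h psi dpsi"
  define F where "F = BO_flux rho h psi dpsi"
  have cont: "continuous_on {BOleft..0} psi" and zero: "psi BOleft = 0" "psi 0 = 0"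
    and deriv: "\<And>x. x \<in> {BOleft<..<0} \<Longrightarrow> (psi has_vector_derivative dpsi x) (at x)"
    using eigen by (auto simp: BO_eigenpair_def)
  obtain F' where F': "\<And>x. x \<in> {BOleft<..<0} \<Longrightarrow> (F has_real_derivative F' x) (at x)"
    and w_le: "\<And>x. x \<in> {BOleft<..<0} \<Longrightarrow> w x \<le> F' x + 2 * (cmod (psi x))\<^sup>2"
    using BO_eigenpair_flux_derivative[OF eigen h rho lam] unfolding F_def w_def by metis
  have w_int: "w integrable_on {c..d}" if "{c..d} \<subseteq> {BOleft<..<0}" for c d
    unfolding w_def
    by (rule integrable_continuous_interval[OF BO_eigenpair_weighted_energy_continuous_on[OF eigen that]])
  have psi_int: "(\<lambda>x. (cmod (psi x))\<^sup>2) integrable_on {c..d}" if "{c..d} \<subseteq> {BOleft..0}" for c d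
    using cont that by (intro integrable_continuous_interval continuous_intros) (auto elim: continuous_on_subset)
  obtain a' where a': "a' \<in> {BOleft<..<a}" "0 \<le> Re (dpsi a' * cnj (psi a'))"
    using ab cont zero(1) deriv
    by (elim Re_deriv_mult_cnj_nonneg_near_left_zero[of BOleft a psi dpsi])
       (auto elim: continuous_on_subset)
  obtain b' where b': "b' \<in> {b<..<0}" "Re (dpsi b' * cnj (psi b')) \<le> 0"
    using ab cont zero(2) deriv
    by (elim Re_deriv_mult_cnj_nonpos_near_right_zero[of b 0 psi dpsi])
       (auto elim: continuous_on_subset)
  have sub: "{a..b} \<subseteq> {a'..b'}" "{a'..b'} \<subseteq> {BOleft<..<0}" "{a'..b'} \<subseteq> {BOleft..0}"
    using a' b' by auto
  have "integral {a..b} w \<le> integral {a'..b'} w"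
    using sub by (intro integral_subset_le w_int) (auto simp: w_def BO_weighted_energy_def)
  also have "\<dots> \<le> integral {a'..b'} (\<lambda>x. 2 * (cmod (psi x))\<^sup>2)"
  proof (rule integral_le_integral_if_le_derivative[where F = F and F' = F'])
    show "0 \<le> F a'" "F b' \<le> 0"
      using a'(2) b'(2) by (auto simp: F_def BO_flux_def mult_nonneg_nonpos)
    show "a' \<le> b'"
      using a' b' ab by simp
    show "(F has_real_derivative F' x) (at x)" "w x \<le> F' x + 2 * (cmod (psi x))\<^sup>2"
      if "x \<in> {a'..b'}" for x
      using F' w_le sub(2) that by blast+
    show "w integrable_on {a'..b'}" "(\<lambda>x. 2 * (cmod (psi x))\<^sup>2) integrable_on {a'..b'}"
      using w_int[OF sub(2)] psi_int[OF sub(3)] by (auto intro: integrable_on_cmult_left)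
  qed
  also have "\<dots> \<le> 2 * integral {BOleft..0} (\<lambda>x. (cmod (psi x))\<^sup>2)"
    using sub psi_int[of BOleft 0] psi_int[of a' b'] by (auto intro!: integral_subset_le)
  finally show ?thesis
    using w_int[of a b] sub(1,2) unfolding w_def by blast
qed

lemma BO_eigenpair_weighted_energy_bound:
  fixes psi dpsi :: "real \<Rightarrow> complex"
  assumes "BO_eigenpair h lam psi dpsi" and "0 < h" and "0 < rho" "rho < pi / 2" and "lam \<le> 1/2"
  shows "BO_weighted_energy rho h psi dpsi integrable_on {BOleft..0} \<and>
         integral {BOleft..0} (BO_weighted_energy rho h psi dpsi)
           \<le> 2 * integral {BOleft..0} (\<lambda>x. (cmod (psi x))\<^sup>2)"
proof (rule nonneg_integrable_on_Icc_if_inner_integrals_bounded)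
  show "BOleft < 0"
    by (simp add: BOleft_def)
  show "0 \<le> BO_weighted_energy rho h psi dpsi x" for x
    by (simp add: BO_weighted_energy_def)
  fix a b
  assume "BOleft < a" "a \<le> b" "b < 0"
  from BO_eigenpair_weighted_energy_inner_bound[OF assms this]
  show "BO_weighted_energy rho h psi dpsi integrable_on {a..b}"
    and "integral {a..b} (BO_weighted_energy rho h psi dpsi)
           \<le> 2 * integral {BOleft..0} (\<lambda>x. (cmod (psi x))\<^sup>2)"
    by auto
qed

theorem proposition4p4:
  fixes Gamma0 rho0 :: real
  assumes "Gamma0 > 0" and "0 < rho0" and "rho0 < pi / 2"
  shows "\<exists>h0>0. \<exists>C0>0. \<forall>h lam psi dpsi.
           0 < h \<and> h < h0 \<and> BO_eigenpair h lam psi dpsi \<and>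
           \<bar>lam - 1/8\<bar> \<le> Gamma0 * h powr (2/3) \<longrightarrow>
           (let w = (\<lambda>x. (x + pi * sqrt 2) powr (- rho0 / h) *
                         ((cmod (psi x))\<^sup>2 + (cmod (complex_of_real h * dpsi x))\<^sup>2))
            in w integrable_on {BOleft..0} \<and>
               integral {BOleft..0} w \<le> C0 * integral {BOleft..0} (\<lambda>x. (cmod (psi x))\<^sup>2))"
proof -
  define h0 where "h0 = (3 / (8 * Gamma0)) powr (3/2)"
  \<comment> \<open>so that \<open>\<Gamma>\<^sub>0 h^(2/3) \<le> 3/8\<close> for \<open>h < h\<^sub>0\<close>, i.e. \<open>\<lambda> \<le> 1/2\<close>\<close>
  have "0 < h0"
    using assms(1) by (simp add: h0_def)
  have lam: "lam \<le> 1/2" if "0 < h" "h < h0" "\<bar>lam - 1/8\<bar> \<le> Gamma0 * h powr (2/3)" for h lam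
  proof -
    have "Gamma0 * h powr (2/3) \<le> Gamma0 * h0 powr (2/3)"
      using that assms(1) by (intro mult_left_mono powr_mono2) auto
    also have "\<dots> = 3/8"
      using assms(1) by (simp add: h0_def powr_powr)
    finally show ?thesis
      using that(3) by linarith
  qed
  have "BO_weighted_energy rho0 h psi dpsi integrable_on {BOleft..0} \<and>
      integral {BOleft..0} (BO_weighted_energy rho0 h psi dpsi)
        \<le> 2 * integral {BOleft..0} (\<lambda>x. (cmod (psi x))\<^sup>2)"
    if "0 < h \<and> h < h0 \<and> BO_eigenpair h lam psi dpsi \<and> \<bar>lam - 1/8\<bar> \<le> Gamma0 * h powr (2/3)"
    for h lam psi dpsi
    using that lam[of h lam] assms(2,3) by (intro BO_eigenpair_weighted_energy_bound) auto
  with \<open>0 < h0\<close> show ?thesis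
    unfolding BO_weighted_energy_def[abs_def] Let_def
    by (intro exI[of _ h0] exI[of _ "2::real"] conjI) auto
qed

end
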